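(* Let $G$ be a $3$-regular graph and $\sigma$ a permutation of $E(G)$. Then $B(G,\sigma)$ is not odd if and only if there is a nonempty $2$-regular set of edges $C\subseteq E(G)$ in $G$ such that $\sigma(C)$ is also $2$-regular in $G$.
   Context: All graphs are finite, simple and undirected. A set of edges $C\subseteq E(G)$ is $2$-regular in $G$ if every vertex of $G$ is incident with exactly $0$ or exactly $2$ edges of $C$. $B(G,\sigma)$ is the bipartite graph with parts $V_B=V(G)\times\{0,1\}$ and $W_B=E(G)$ and edge set $\{\{(v,0),e\}: v\in e\}\cup\{\{(v,1),e\}: v\in\sigma(e)\}$. A bipartite graph with parts $V,W$ in which every vertex of $V$ has degree $3$ is called odd if for every nonempty $X\subseteq W$ there is some $v\in V$ with $|X\cap N(v)|$ odd; otherwise it is called even (not odd). *)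

theory Defs
  imports Main
begin

definition simple_graph :: "'a set \<Rightarrow> 'a set set \<Rightarrow> bool" where
  "simple_graph V E \<longleftrightarrow> finite V \<and> (\<forall>e\<in>E. e \<subseteq> V \<and> card e = 2)"

definition degree :: "'a set set \<Rightarrow> 'a \<Rightarrow> nat" where
  "degree E v = card {e\<in>E. v \<in> e}"

definition cubic :: "'a set \<Rightarrow> 'a set set \<Rightarrow> bool" where
  "cubic V E \<longleftrightarrow> (\<forall>v\<in>V. degree E v = 3)"

definition two_regular :: "'a set \<Rightarrow> 'a set set \<Rightarrow> bool" where
  "two_regular V C \<longleftrightarrow> (\<forall>v\<in>V. card {e\<in>C. v \<in> e} = 0 \<or> card {e\<in>C. v \<in> e} = 2)"

text \<open>Edge set of the bipartite graph B(G,sigma) with parts V x {0,1} and E.\<close>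
definition B_edges :: "'a set \<Rightarrow> 'a set set \<Rightarrow> ('a set \<Rightarrow> 'a set) \<Rightarrow> (('a \<times> nat) \<times> 'a set) set" where
  "B_edges V E \<sigma> = {((v,0), e) | v e. v \<in> V \<and> e \<in> E \<and> v \<in> e}
                 \<union> {((v,1), e) | v e. v \<in> V \<and> e \<in> E \<and> v \<in> \<sigma> e}"

definition odd_bipartite :: "'v set \<Rightarrow> 'w set \<Rightarrow> ('v \<times> 'w) set \<Rightarrow> bool" where
  "odd_bipartite VB WB F \<longleftrightarrow>
     (\<forall>X. X \<subseteq> WB \<and> X \<noteq> {} \<longrightarrow> (\<exists>v\<in>VB. odd (card (X \<inter> {w. (v, w) \<in> F}))))"

end

theory Submission
  imports Defs
begin

text \<open>A vertex of B(G,\<sigma>) of the form (v,0) sees, inside a set X of edges, the edges of X at v,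
  and (v,1) sees the edges of \<sigma>(X) at v. So X has even intersection with every neighbourhood
  exactly when X and \<sigma>(X) have even degree everywhere, and in a cubic graph a subgraph has even
  degree everywhere iff every degree is 0 or 2.\<close>

lemma not_odd_bipartite_iff:
  "\<not> odd_bipartite VB WB F \<longleftrightarrow>
     (\<exists>X. X \<subseteq> WB \<and> X \<noteq> {} \<and> (\<forall>v\<in>VB. even (card (X \<inter> {w. (v, w) \<in> F}))))"
  unfolding odd_bipartite_def by blast

lemma B_edges_neighbours_0:
  "v \<in> V \<Longrightarrow> X \<subseteq> E \<Longrightarrow> X \<inter> {w. ((v, 0), w) \<in> B_edges V E \<sigma>} = {e\<in>X. v \<in> e}"
  unfolding B_edges_def by auto

lemma B_edges_neighbours_1:
  "v \<in> V \<Longrightarrow> X \<subseteq> E \<Longrightarrow> X \<inter> {w. ((v, 1), w) \<in> B_edges V E \<sigma>} = {e\<in>X. v \<in> \<sigma> e}"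
  unfolding B_edges_def by auto

lemma card_incident_image:
  assumes "inj_on \<sigma> X"
  shows "card {f\<in>\<sigma> ` X. v \<in> f} = card {e\<in>X. v \<in> \<sigma> e}"
proof -
  have "{f\<in>\<sigma> ` X. v \<in> f} = \<sigma> ` {e\<in>X. v \<in> \<sigma> e}" by auto
  moreover have "inj_on \<sigma> {e\<in>X. v \<in> \<sigma> e}"
    using assms by (rule inj_on_subset) auto
  ultimately show ?thesis by (simp add: card_image)
qed

lemma simple_graph_finite_edges: "simple_graph V E \<Longrightarrow> finite E"
  unfolding simple_graph_def by (meson Pow_iff finite_Pow_iff finite_subset subsetI)

lemma cubic_card_incident_le_3:
  assumes "simple_graph V E" "cubic V E" "X \<subseteq> E" "v \<in> V"
  shows "card {e\<in>X. v \<in> e} \<le> 3"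
proof -
  have "card {e\<in>X. v \<in> e} \<le> card {e\<in>E. v \<in> e}"
    using assms(3) simple_graph_finite_edges[OF assms(1)] by (intro card_mono) auto
  with assms(2,4) show ?thesis unfolding cubic_def degree_def by auto
qed

lemma cubic_two_regular_iff_even:
  assumes "simple_graph V E" "cubic V E" "C \<subseteq> E"
  shows "two_regular V C \<longleftrightarrow> (\<forall>v\<in>V. even (card {e\<in>C. v \<in> e}))"
proof -
  have "n = 0 \<or> n = 2 \<longleftrightarrow> even n" if "n \<le> (3::nat)" for n
    using that by (auto simp: le_Suc_eq numeral_3_eq_3)
  with cubic_card_incident_le_3[OF assms] show ?thesis
    unfolding two_regular_def by auto
qed

lemma B_edges_even_neighbourhoods_iff:
  assumes "inj_on \<sigma> X" "X \<subseteq> E"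
  shows "(\<forall>p\<in>V \<times> {0, 1}. even (card (X \<inter> {w. (p, w) \<in> B_edges V E \<sigma>}))) \<longleftrightarrow>
           (\<forall>v\<in>V. even (card {e\<in>X. v \<in> e})) \<and> (\<forall>v\<in>V. even (card {f\<in>\<sigma> ` X. v \<in> f}))"
  using B_edges_neighbours_0[OF _ assms(2)] B_edges_neighbours_1[OF _ assms(2)]
    card_incident_image[OF assms(1)]
  by auto

theorem mainTheorem5:
  fixes V :: "'a set" and E :: "'a set set" and \<sigma> :: "'a set \<Rightarrow> 'a set"
  assumes "simple_graph V E"
    and "cubic V E"
    and "bij_betw \<sigma> E E"
  shows "\<not> odd_bipartite (V \<times> {0, 1}) E (B_edges V E \<sigma>)
         \<longleftrightarrow> (\<exists>C. C \<noteq> {} \<and> C \<subseteq> E \<and> two_regular V C \<and> two_regular V (\<sigma> ` C))"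
proof -
  have "(\<forall>p\<in>V \<times> {0, 1}. even (card (C \<inter> {w. (p, w) \<in> B_edges V E \<sigma>}))) \<longleftrightarrow>
          two_regular V C \<and> two_regular V (\<sigma> ` C)" if "C \<subseteq> E" for C
  proof -
    have "inj_on \<sigma> C" "\<sigma> ` C \<subseteq> E"
      using assms(3) that by (auto simp: bij_betw_def inj_on_subset)
    then show ?thesis
      by (simp only: B_edges_even_neighbourhoods_iff[OF _ that]
          cubic_two_regular_iff_even[OF assms(1,2)] that)
  qed
  then show ?thesis
    unfolding not_odd_bipartite_iff by blast
qed

end
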